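(* Let $\varphi:\mathbb{R}^n\to\mathbb{R}$ be of class $\mathcal{C}^{1,1}$ and let $x^0\in\mathbb{R}^n$ be such that $\partial^2\varphi(x)$ is positive-definite (i.e. $\langle z,u\rangle>0$ for all $u\ne0$, $z\in\partial^2\varphi(x)(u)$) for every $x$ in $\Omega:=\{x\mid\varphi(x)\le\varphi(x^0)\}$. Let $\{x^k\}$ be a sequence generated by the Generalized Damped Newton Algorithm (with $\sigma\in(0,\tfrac12)$, $\beta\in(0,1)$) from $x^0$, and suppose that $\{x^k\}$ converges to some $\bar x$ with $x^k\neq\bar x$ for all $k$. Then: (i) $\{\varphi(x^k)\}$ converges to $\varphi(\bar x)$ at least Q-linearly, i.e. there are $\mu\in(0,1)$ and $k_0$ with $\varphi(x^{k+1})-\varphi(\bar x)\le\mu(\varphi(x^k)-\varphi(\bar x))$ for $k\ge k_0$; (ii) $\{x^k\}$ converges to $\bar x$ and $\{\|\nabla\varphi(x^k)\|\}$ converges to $0$ at least R-linearly, i.e. there are $c>0$, $\lambda\in(0,1)$, $k_0$ with $\|x^k-\bar x\|\le c\lambda^k$ and $\|\nabla\varphi(x^k)\|\le c\lambda^k$ for all $k\ge k_0$.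
   Context: A function $\varphi:\mathbb{R}^n\to\mathbb{R}$ is of class $\mathcal{C}^{1,1}$ if it is continuously differentiable and $\nabla\varphi$ is Lipschitz continuous around every point. Regular normal cone: $\widehat N_\Omega(\bar z):=\{v\mid \limsup_{z\to\bar z,\,z\in\Omega}\langle v,z-\bar z\rangle/\|z-\bar z\|\le 0\}$; limiting normal cone $N_\Omega(\bar z)$: all $v$ with $z_k\to\bar z$, $z_k\in\Omega$, $v_k\to v$, $v_k\in\widehat N_\Omega(z_k)$. Coderivative of $F:\mathbb{R}^n\rightrightarrows\mathbb{R}^m$: $D^*F(\bar x,\bar y)(v):=\{u\mid (u,-v)\in N_{\operatorname{gph}F}(\bar x,\bar y)\}$. For $\mathcal{C}^{1,1}$ $\varphi$: $\partial^2\varphi(x)(u):=D^*(\nabla\varphi)(x,\nabla\varphi(x))(u)$. Generalized Damped Newton Algorithm: given $\sigma\in(0,\tfrac12)$, $\beta\in(0,1)$ and $x^0$, set $k=0$. If $\nabla\varphi(x^k)=0$ stop. Otherwise choose $d^k$ with $-\nabla\varphi(x^k)\in\partial^2\varphi(x^k)(d^k)$; set $\tau_k=1$ and, while $\varphi(x^k+\tau_kd^k)>\varphi(x^k)+\sigma\tau_k\langle\nabla\varphi(x^k),d^k\rangle$, replace $\tau_k$ by $\beta\tau_k$; set $x^{k+1}:=x^k+\tau_kd^k$, increase $k$ by 1 and repeat. *)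

theory Defs
  imports "HOL-Analysis.Analysis"
begin

definition grad :: "('a::euclidean_space \<Rightarrow> real) \<Rightarrow> 'a \<Rightarrow> 'a" where
  "grad \<phi> x = (SOME v. (\<phi> has_derivative (\<lambda>h. v \<bullet> h)) (at x))"

definition C11 :: "('a::euclidean_space \<Rightarrow> real) \<Rightarrow> bool" where
  "C11 \<phi> \<longleftrightarrow> (\<forall>x. \<phi> differentiable (at x)) \<and> continuous_on UNIV (grad \<phi>) \<and>
     (\<forall>x. \<exists>\<delta>>0. \<exists>L. \<forall>y\<in>ball x \<delta>. \<forall>z\<in>ball x \<delta>.
        norm (grad \<phi> y - grad \<phi> z) \<le> L * norm (y - z))"

text \<open>Regular normal cone: limsup_{z -> zb, z in Om} <v, z - zb>/|z - zb| <= 0, unfolded.\<close>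
definition regular_normal_cone :: "'a::euclidean_space set \<Rightarrow> 'a \<Rightarrow> 'a set" where
  "regular_normal_cone \<Omega> zb = {v. \<forall>\<epsilon>>0. \<exists>\<delta>>0. \<forall>z\<in>\<Omega>.
      0 < norm (z - zb) \<and> norm (z - zb) < \<delta> \<longrightarrow> v \<bullet> (z - zb) \<le> \<epsilon> * norm (z - zb)}"

definition limiting_normal_cone :: "'a::euclidean_space set \<Rightarrow> 'a \<Rightarrow> 'a set" where
  "limiting_normal_cone \<Omega> zb = {v. \<exists>zs vs. (\<forall>k. zs k \<in> \<Omega>) \<and> zs \<longlonglongrightarrow> zb \<and>
      vs \<longlonglongrightarrow> v \<and> (\<forall>k. vs k \<in> regular_normal_cone \<Omega> (zs k))}"

definition coderivative :: "('a::euclidean_space \<Rightarrow> 'b::euclidean_space set) \<Rightarrow> 'a \<Rightarrow> 'b \<Rightarrow> 'b \<Rightarrow> 'a set" where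
  "coderivative F xb yb v = {u. (u, - v) \<in> limiting_normal_cone {(x, y). y \<in> F x} (xb, yb)}"

definition gen_hessian :: "('a::euclidean_space \<Rightarrow> real) \<Rightarrow> 'a \<Rightarrow> 'a \<Rightarrow> 'a set" where
  "gen_hessian \<phi> x u = coderivative (\<lambda>y. {grad \<phi> y}) x (grad \<phi> x) u"

definition armijo :: "('a::euclidean_space \<Rightarrow> real) \<Rightarrow> real \<Rightarrow> 'a \<Rightarrow> 'a \<Rightarrow> real \<Rightarrow> bool" where
  "armijo \<phi> \<sigma> x d t \<longleftrightarrow> \<phi> (x + t *\<^sub>R d) \<le> \<phi> x + \<sigma> * t * (grad \<phi> x \<bullet> d)"

definition gdn_sequence :: "('a::euclidean_space \<Rightarrow> real) \<Rightarrow> real \<Rightarrow> real \<Rightarrow> 'a \<Rightarrow> (nat \<Rightarrow> 'a) \<Rightarrow> bool" where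
  "gdn_sequence \<phi> \<sigma> \<beta> x0 xs \<longleftrightarrow> xs 0 = x0 \<and>
    (\<forall>k. grad \<phi> (xs k) \<noteq> 0 \<and>
      (\<exists>d j. - grad \<phi> (xs k) \<in> gen_hessian \<phi> (xs k) d \<and>
         armijo \<phi> \<sigma> (xs k) d (\<beta> ^ j) \<and> (\<forall>i<j. \<not> armijo \<phi> \<sigma> (xs k) d (\<beta> ^ i)) \<and>
         xs (Suc k) = xs k + (\<beta> ^ j) *\<^sub>R d))"

end

theory Submission
  imports Defs
begin

(*
  Positive-definiteness of the limiting coderivative at xb spreads, by compactness of normalised
  coderivative pairs, to uniform positivity kappa |u|^2 <= <w, u> of the regular coderivative of
  grad phi on a ball around xb.  A mean value inequality for proximal subgradients, proved with a
  localised inf-convolution, turns this into strong monotonicity of grad phi on that ball.  Near xb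
  the Newton directions are then comparable to the gradient, backtracking accepts step sizes bounded
  away from 0, and the Armijo decrease phi(x') <= phi(x) - a |grad phi x|^2 together with the
  Polyak-Lojasiewicz bound phi(x) - phi(xb) <= |grad phi x|^2 / (2 kappa) gives Q-linear decay of
  the values.  R-linear decay of the gradients follows, and summing the steps
  |x' - x| <= |grad phi x| / kappa gives R-linear convergence of the iterates.
*)


section \<open>Calculus of \<open>C\<^sup>1\<^sup>,\<^sup>1\<close> functions\<close>

lemma norm_add_square: "(norm (a + b))\<^sup>2 = (norm a)\<^sup>2 + 2 * (a \<bullet> b) + (norm b)\<^sup>2"
  by (simp add: power2_norm_eq_inner inner_add_left inner_add_right inner_commute)

lemma add_scaleR_in_closed_segment: "0 \<le> t \<Longrightarrow> t \<le> 1 \<Longrightarrow> x + t *\<^sub>R u \<in> closed_segment x (x + u)"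
  unfolding in_segment by (intro exI[of _ t]) (simp add: algebra_simps)

lemma mem_ball_half: "x \<in> ball c (\<rho> / 2) \<Longrightarrow> x \<in> ball c \<rho>"
  using zero_le_dist[of c x] unfolding mem_ball by linarith

lemma closed_segment_add_subset_ball:
  assumes "x \<in> ball c (\<rho> / 2)" "norm v < \<rho> / 2"
  shows "closed_segment x (x + v) \<subseteq> ball c \<rho>"
proof (rule closed_segment_subset[OF _ _ convex_ball])
  have "dist x (x + v) = norm v" by (simp add: dist_norm)
  then show "x \<in> ball c \<rho>" "x + v \<in> ball c \<rho>"
    using assms dist_triangle[of c "x + v" x] zero_le_dist[of c x] unfolding mem_ball by linarith+
qed

lemma has_derivative_grad:
  assumes "\<phi> differentiable (at x)"
  shows "(\<phi> has_derivative (\<lambda>h. grad \<phi> x \<bullet> h)) (at x)"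
proof -
  obtain D where D: "(\<phi> has_derivative D) (at x)"
    using assms unfolding differentiable_def by blast
  then have "D = (\<lambda>h. adjoint D 1 \<bullet> h)"
    using adjoint_clauses(2)[OF has_derivative_linear[OF D]] by auto
  with D have "\<exists>v. (\<phi> has_derivative (\<lambda>h. v \<bullet> h)) (at x)" by metis
  then show ?thesis unfolding grad_def by (rule someI_ex)
qed

lemma C11_has_derivative_grad:
  "C11 \<phi> \<Longrightarrow> (\<phi> has_derivative (\<lambda>h. grad \<phi> x \<bullet> h)) (at x)"
  unfolding C11_def by (blast intro: has_derivative_grad)

lemma C11_continuous_on_grad: "C11 \<phi> \<Longrightarrow> continuous_on UNIV (grad \<phi>)"
  unfolding C11_def by blast

lemma C11_continuous_on: "C11 \<phi> \<Longrightarrow> continuous_on UNIV \<phi>"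
  by (meson C11_has_derivative_grad continuous_at_imp_continuous_on has_derivative_continuous)

lemma C11_lipschitz_on_grad:
  assumes "C11 \<phi>"
  obtains \<delta> L where "0 < \<delta>" "0 < L" "L-lipschitz_on (ball x \<delta>) (grad \<phi>)"
proof -
  obtain \<delta> L where "0 < \<delta>" and L: "\<forall>y\<in>ball x \<delta>. \<forall>z\<in>ball x \<delta>.
      norm (grad \<phi> y - grad \<phi> z) \<le> L * norm (y - z)"
    using assms unfolding C11_def by blast
  have "(max L 1)-lipschitz_on (ball x \<delta>) (grad \<phi>)"
  proof (rule lipschitz_onI)
    fix y z assume "y \<in> ball x \<delta>" "z \<in> ball x \<delta>"
    then have "dist (grad \<phi> y) (grad \<phi> z) \<le> L * dist y z"
      using L by (simp add: dist_norm)
    also have "\<dots> \<le> max L 1 * dist y z" by (simp add: mult_right_mono)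
    finally show "dist (grad \<phi> y) (grad \<phi> z) \<le> max L 1 * dist y z" .
  qed simp
  then show ?thesis using that[of \<delta> "max L 1"] \<open>0 < \<delta>\<close> by simp
qed

lemma C11_has_real_derivative_along_line:
  assumes "C11 \<phi>"
  shows "((\<lambda>s. \<phi> (x + s *\<^sub>R v)) has_real_derivative grad \<phi> (x + s *\<^sub>R v) \<bullet> v) (at s)"
proof -
  have "((\<lambda>s. x + s *\<^sub>R v) has_derivative (\<lambda>t. t *\<^sub>R v)) (at s)"
    by (auto intro!: derivative_eq_intros)
  from has_derivative_compose[OF this C11_has_derivative_grad[OF assms]]
  show ?thesis by (simp add: has_field_derivative_def mult_commute_abs)
qed

lemma increment_ge_of_derivative_ge:
  fixes g g' :: "real \<Rightarrow> real"
  assumes "\<And>s. 0 \<le> s \<Longrightarrow> s \<le> 1 \<Longrightarrow> (g has_real_derivative g' s) (at s)"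
    and "\<And>s. 0 \<le> s \<Longrightarrow> s \<le> 1 \<Longrightarrow> g' 0 + c * s \<le> g' s"
  shows "g 0 + g' 0 + c / 2 \<le> g 1"
proof -
  define e where "e s = g s - s * g' 0 - c / 2 * s\<^sup>2" for s
  have "e 0 \<le> e 1"
  proof (rule DERIV_nonneg_imp_nondecreasing[of 0 1 e])
    fix s :: real assume "0 \<le> s" "s \<le> 1"
    then have "(e has_real_derivative g' s - g' 0 - c * s) (at s)" "0 \<le> g' s - g' 0 - c * s"
      unfolding e_def using assms[of s] by (auto intro!: derivative_eq_intros)
    then show "\<exists>y. (e has_real_derivative y) (at s) \<and> 0 \<le> y" by blast
  qed simp
  then show ?thesis unfolding e_def by simp
qed

lemma C11_descent_lemma:
  assumes "C11 \<phi>"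
    and Lip: "\<And>y. y \<in> closed_segment x (x + v) \<Longrightarrow> norm (grad \<phi> y - grad \<phi> x) \<le> L * norm (y - x)"
  shows "\<phi> (x + v) \<le> \<phi> x + grad \<phi> x \<bullet> v + L / 2 * (norm v)\<^sup>2"
proof -
  let ?g = "\<lambda>s. - \<phi> (x + s *\<^sub>R v)" and ?g' = "\<lambda>s. - (grad \<phi> (x + s *\<^sub>R v) \<bullet> v)"
  have "?g 0 + ?g' 0 + (- L * (norm v)\<^sup>2) / 2 \<le> ?g 1"
  proof (rule increment_ge_of_derivative_ge)
    fix s :: real assume s: "0 \<le> s" "s \<le> 1"
    show "(?g has_real_derivative ?g' s) (at s)"
      by (intro DERIV_minus C11_has_real_derivative_along_line assms(1))
    have "norm (grad \<phi> (x + s *\<^sub>R v) - grad \<phi> x) \<le> L * norm (s *\<^sub>R v)"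
      using Lip[OF add_scaleR_in_closed_segment[OF s]] by simp
    then have "(grad \<phi> (x + s *\<^sub>R v) - grad \<phi> x) \<bullet> v \<le> L * norm (s *\<^sub>R v) * norm v"
      using order.trans[OF norm_cauchy_schwarz mult_right_mono[OF _ norm_ge_zero]] by blast
    then show "?g' 0 + - L * (norm v)\<^sup>2 * s \<le> ?g' s"
      using s by (simp add: inner_diff_left power2_eq_square algebra_simps)
  qed
  then show ?thesis by simp
qed

lemma C11_strong_convexity_bound:
  assumes "C11 \<phi>"
    and mono: "\<And>y. y \<in> closed_segment x (x + v) \<Longrightarrow>
      \<kappa> * (norm (y - x))\<^sup>2 \<le> (y - x) \<bullet> (grad \<phi> y - grad \<phi> x)"
  shows "\<phi> x + grad \<phi> x \<bullet> v + \<kappa> / 2 * (norm v)\<^sup>2 \<le> \<phi> (x + v)"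
proof -
  let ?g = "\<lambda>s. \<phi> (x + s *\<^sub>R v)" and ?g' = "\<lambda>s. grad \<phi> (x + s *\<^sub>R v) \<bullet> v"
  have "?g 0 + ?g' 0 + \<kappa> * (norm v)\<^sup>2 / 2 \<le> ?g 1"
  proof (rule increment_ge_of_derivative_ge)
    fix s :: real assume s: "0 \<le> s" "s \<le> 1"
    show "(?g has_real_derivative ?g' s) (at s)"
      by (intro C11_has_real_derivative_along_line assms(1))
    have "s * (s * (\<kappa> * (norm v)\<^sup>2)) \<le> s * ((grad \<phi> (x + s *\<^sub>R v) - grad \<phi> x) \<bullet> v)"
      using mono[OF add_scaleR_in_closed_segment[OF s]] s
      by (simp add: inner_diff_left inner_commute power2_eq_square algebra_simps)
    then have "s * (\<kappa> * (norm v)\<^sup>2) \<le> (grad \<phi> (x + s *\<^sub>R v) - grad \<phi> x) \<bullet> v \<or> s = 0"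
      using s by (auto simp: mult_le_cancel_left)
    then show "?g' 0 + \<kappa> * (norm v)\<^sup>2 * s \<le> ?g' s"
      using s by (auto simp: inner_diff_left algebra_simps)
  qed
  then show ?thesis by simp
qed

lemma C11_polyak_lojasiewicz:
  assumes "C11 \<phi>" "0 < \<kappa>"
    and mono: "\<And>y. y \<in> closed_segment x z \<Longrightarrow> \<kappa> * (norm (y - x))\<^sup>2 \<le> (y - x) \<bullet> (grad \<phi> y - grad \<phi> x)"
  shows "\<phi> x - \<phi> z \<le> (norm (grad \<phi> x))\<^sup>2 / (2 * \<kappa>)"
proof -
  let ?g = "grad \<phi> x" and ?v = "z - x"
  have "\<phi> x + ?g \<bullet> ?v + \<kappa> / 2 * (norm ?v)\<^sup>2 \<le> \<phi> z"
    using C11_strong_convexity_bound[OF \<open>C11 \<phi>\<close>, of x ?v \<kappa>] mono by simp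
  moreover have "- (norm ?g * norm ?v) \<le> ?g \<bullet> ?v"
    using Cauchy_Schwarz_ineq2[of ?g ?v] by (simp add: abs_le_iff)
  moreover have "- (norm ?g)\<^sup>2 / (2 * \<kappa>) \<le> \<kappa> / 2 * (norm ?v)\<^sup>2 - norm ?g * norm ?v"
    using \<open>0 < \<kappa>\<close> sum_squares_ge_zero[of "\<kappa> * norm ?v - norm ?g" 0]
    by (simp add: field_simps power2_eq_square)
  ultimately show ?thesis by linarith
qed

section \<open>Regular and limiting coderivatives of single-valued maps\<close>

definition fun_graph :: "('a \<Rightarrow> 'b) \<Rightarrow> ('a \<times> 'b) set" where
  "fun_graph F = {(x, y). y = F x}"

definition regular_coderivative ::
    "('a::euclidean_space \<Rightarrow> 'b::euclidean_space) \<Rightarrow> 'a \<Rightarrow> 'b \<Rightarrow> 'a set" where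
  "regular_coderivative F x u = {w. (w, - u) \<in> regular_normal_cone (fun_graph F) (x, F x)}"

lemma regular_normal_cone_scaleR:
  assumes v: "v \<in> regular_normal_cone \<Omega> zb" and "0 < a"
  shows "a *\<^sub>R v \<in> regular_normal_cone \<Omega> zb"
  unfolding regular_normal_cone_def
proof safe
  fix \<epsilon> :: real assume "0 < \<epsilon>"
  then have "0 < \<epsilon> / a" using \<open>0 < a\<close> by simp
  with v obtain \<delta> where "0 < \<delta>" and \<delta>: "\<forall>z\<in>\<Omega>. 0 < norm (z - zb) \<and> norm (z - zb) < \<delta>
      \<longrightarrow> v \<bullet> (z - zb) \<le> \<epsilon> / a * norm (z - zb)"
    unfolding regular_normal_cone_def by blast
  have "a *\<^sub>R v \<bullet> (z - zb) \<le> \<epsilon> * norm (z - zb)"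
    if "z \<in> \<Omega>" "0 < norm (z - zb)" "norm (z - zb) < \<delta>" for z
    using mult_left_mono[OF \<delta>[rule_format, OF that(1)] less_imp_le[OF \<open>0 < a\<close>]] that \<open>0 < a\<close>
    by simp
  with \<open>0 < \<delta>\<close> show "\<exists>\<delta>>0. \<forall>z\<in>\<Omega>. 0 < norm (z - zb) \<and> norm (z - zb) < \<delta>
      \<longrightarrow> a *\<^sub>R v \<bullet> (z - zb) \<le> \<epsilon> * norm (z - zb)" by blast
qed

lemma regular_coderivative_scaleR:
  "w \<in> regular_coderivative F x u \<Longrightarrow> 0 < a \<Longrightarrow> a *\<^sub>R w \<in> regular_coderivative F x (a *\<^sub>R u)"
  using regular_normal_cone_scaleR[of "(w, - u)"] unfolding regular_coderivative_def by simp

lemma regular_coderivativeD: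
  assumes "w \<in> regular_coderivative F q u" "0 < \<epsilon>"
  obtains \<delta> where "0 < \<delta>"
    "\<And>a. a \<noteq> q \<Longrightarrow> norm (a - q) + norm (F a - F q) < \<delta> \<Longrightarrow>
      w \<bullet> (a - q) - u \<bullet> (F a - F q) \<le> \<epsilon> * (norm (a - q) + norm (F a - F q))"
proof -
  obtain \<delta> where "0 < \<delta>" and \<delta>: "\<forall>z\<in>fun_graph F. 0 < norm (z - (q, F q)) \<and> norm (z - (q, F q)) < \<delta>
      \<longrightarrow> (w, - u) \<bullet> (z - (q, F q)) \<le> \<epsilon> * norm (z - (q, F q))"
    using assms unfolding regular_coderivative_def regular_normal_cone_def by blast
  have "w \<bullet> (a - q) - u \<bullet> (F a - F q) \<le> \<epsilon> * (norm (a - q) + norm (F a - F q))"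
    if "a \<noteq> q" "norm (a - q) + norm (F a - F q) < \<delta>" for a
  proof -
    let ?d = "(a, F a) - (q, F q)"
    have "0 < norm ?d" using that(1) by (simp add: zero_prod_def)
    moreover have "norm ?d \<le> norm (a - q) + norm (F a - F q)"
      using norm_Pair_le[of "a - q" "F a - F q"] by simp
    moreover have "(a, F a) \<in> fun_graph F" by (simp add: fun_graph_def)
    ultimately have "(w, - u) \<bullet> ?d \<le> \<epsilon> * norm ?d"
      using \<delta> that(2) by auto
    also have "\<dots> \<le> \<epsilon> * (norm (a - q) + norm (F a - F q))"
      using \<open>norm ?d \<le> _\<close> \<open>0 < \<epsilon>\<close> by simp
    finally show ?thesis by (simp add: inner_diff_right)
  qed
  with \<open>0 < \<delta>\<close> that show ?thesis by blast
qed

lemma regular_coderivative_norm_le: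
  assumes Lip: "L-lipschitz_on S F" and "open S" "q \<in> S"
    and w: "w \<in> regular_coderivative F q u"
  shows "norm w \<le> L * norm u"
proof (cases "w = 0")
  case True
  with lipschitz_on_nonneg[OF Lip] show ?thesis by simp
next
  case False
  have "0 \<le> L" using lipschitz_on_nonneg[OF Lip] .
  obtain \<rho> where "0 < \<rho>" "ball q \<rho> \<subseteq> S"
    using \<open>open S\<close> \<open>q \<in> S\<close> open_contains_ball by blast
  have approx: "norm w \<le> L * norm u + \<epsilon> * (1 + L)" if "0 < \<epsilon>" for \<epsilon>
  proof -
    obtain \<delta> where "0 < \<delta>" and \<delta>: "\<And>a. a \<noteq> q \<Longrightarrow> norm (a - q) + norm (F a - F q) < \<delta> \<Longrightarrow>
        w \<bullet> (a - q) - u \<bullet> (F a - F q) \<le> \<epsilon> * (norm (a - q) + norm (F a - F q))"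
      using regular_coderivativeD[OF w \<open>0 < \<epsilon>\<close>] by blast
    \<comment> \<open>Probe the normal inequality at the graph point above \<open>a = q + t w\<close> for a small \<open>t > 0\<close>.\<close>
    define t where "t = min \<delta> \<rho> / (2 * (1 + L) * norm w)"
    define a where "a = q + t *\<^sub>R w"
    have "0 < t" unfolding t_def using \<open>0 < \<delta>\<close> \<open>0 < \<rho>\<close> \<open>0 \<le> L\<close> False by simp
    have "(1 + L) * (t * norm w) = min \<delta> \<rho> / 2"
      unfolding t_def using \<open>0 \<le> L\<close> False by (simp add: divide_simps)
    then have small: "(1 + L) * (t * norm w) < min \<delta> \<rho>"
      using \<open>0 < \<delta>\<close> \<open>0 < \<rho>\<close> by linarith
    have na: "norm (a - q) = t * norm w" unfolding a_def using \<open>0 < t\<close> by simp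
    have "0 \<le> L * (t * norm w)" using \<open>0 \<le> L\<close> \<open>0 < t\<close> by simp
    with small na have "a \<in> ball q \<rho>"
      by (simp add: dist_norm norm_minus_commute algebra_simps)
    with \<open>ball q \<rho> \<subseteq> S\<close> have "a \<in> S" by blast
    then have FL: "norm (F a - F q) \<le> L * (t * norm w)"
      using lipschitz_onD[OF Lip \<open>a \<in> S\<close> \<open>q \<in> S\<close>] na by (simp add: dist_norm)
    with na have sum: "norm (a - q) + norm (F a - F q) \<le> (1 + L) * (t * norm w)"
      by (simp add: algebra_simps)
    have "a \<noteq> q" using na \<open>0 < t\<close> False by auto
    moreover have "norm (a - q) + norm (F a - F q) < \<delta>" using sum small by linarith
    ultimately have "w \<bullet> (a - q) - u \<bullet> (F a - F q) \<le> \<epsilon> * (norm (a - q) + norm (F a - F q))"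
      by (rule \<delta>)
    also have "\<dots> \<le> \<epsilon> * ((1 + L) * (t * norm w))"
      using sum \<open>0 < \<epsilon>\<close> by (simp add: mult_left_mono)
    finally have "w \<bullet> (a - q) - u \<bullet> (F a - F q) \<le> \<epsilon> * ((1 + L) * (t * norm w))" .
    moreover have "w \<bullet> (a - q) = t * (norm w)\<^sup>2"
      unfolding a_def by (simp add: power2_norm_eq_inner)
    moreover have "u \<bullet> (F a - F q) \<le> norm u * (L * (t * norm w))"
      using order.trans[OF norm_cauchy_schwarz mult_left_mono[OF FL norm_ge_zero]] .
    ultimately have "(t * norm w) * norm w \<le> (t * norm w) * (L * norm u + \<epsilon> * (1 + L))"
      by (simp add: power2_eq_square algebra_simps)
    then show ?thesis using \<open>0 < t\<close> False by simp
  qed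
  show ?thesis
  proof (rule field_le_epsilon)
    fix e :: real assume "0 < e"
    then show "norm w \<le> L * norm u + e"
      using approx[of "e / (1 + L)"] \<open>0 \<le> L\<close> by simp
  qed
qed

lemma coderivative_fun_graph_iff:
  assumes "continuous_on UNIV F"
  shows "z \<in> coderivative (\<lambda>y. {F y}) x (F x) u \<longleftrightarrow>
    (\<exists>q w v. q \<longlonglongrightarrow> x \<and> w \<longlonglongrightarrow> z \<and> v \<longlonglongrightarrow> u \<and> (\<forall>k. w k \<in> regular_coderivative F (q k) (v k)))"
    (is "?lhs \<longleftrightarrow> ?rhs")
proof
  assume ?lhs
  then obtain zs vs where zs: "\<And>k. zs k \<in> fun_graph F" "zs \<longlonglongrightarrow> (x, F x)" "vs \<longlonglongrightarrow> (z, - u)"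
    and vs: "\<And>k. vs k \<in> regular_normal_cone (fun_graph F) (zs k)"
    unfolding coderivative_def limiting_normal_cone_def fun_graph_def by auto
  define q where "q k = fst (zs k)" for k
  have "zs k = (q k, F (q k))" for k
    using zs(1)[of k] unfolding fun_graph_def q_def by auto
  then have "fst (vs k) \<in> regular_coderivative F (q k) (- snd (vs k))" for k
    using vs[of k] unfolding regular_coderivative_def by simp
  moreover have "q \<longlonglongrightarrow> x" "(\<lambda>k. fst (vs k)) \<longlonglongrightarrow> z" "(\<lambda>k. - snd (vs k)) \<longlonglongrightarrow> u"
    unfolding q_def
    using tendsto_fst[OF zs(2)] tendsto_fst[OF zs(3)] tendsto_minus[OF tendsto_snd[OF zs(3)]]
    by simp_all
  ultimately show ?rhs by blast
next
  assume ?rhs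
  then obtain q w v where lim: "q \<longlonglongrightarrow> x" "w \<longlonglongrightarrow> z" "v \<longlonglongrightarrow> u"
    and reg: "\<And>k. w k \<in> regular_coderivative F (q k) (v k)" by blast
  have "(\<lambda>k. (q k, F (q k))) \<longlonglongrightarrow> (x, F x)"
    using continuous_on_tendsto_compose[OF assms lim(1)] lim(1) by (intro tendsto_Pair) simp_all
  moreover have "(\<lambda>k. (w k, - v k)) \<longlonglongrightarrow> (z, - u)"
    using lim by (intro tendsto_intros)
  moreover have "(w k, - v k) \<in> regular_normal_cone {(x, y). y \<in> {F x}} (q k, F (q k))" for k
    using reg[of k] unfolding regular_coderivative_def fun_graph_def by simp
  ultimately show ?lhs
    unfolding coderivative_def limiting_normal_cone_def
    by (intro CollectI exI[of _ "\<lambda>k. (q k, F (q k))"] exI[of _ "\<lambda>k. (w k, - v k)"]) auto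
qed

lemma coderivative_estimate_of_regular:
  assumes "continuous_on UNIV F" "open S" "x \<in> S"
    and z: "z \<in> coderivative (\<lambda>y. {F y}) x (F x) u"
    and reg: "\<And>q w u. q \<in> S \<Longrightarrow> w \<in> regular_coderivative F q u \<Longrightarrow>
      \<kappa> * (norm u)\<^sup>2 \<le> w \<bullet> u \<and> norm w \<le> L * norm u"
  shows "\<kappa> * (norm u)\<^sup>2 \<le> z \<bullet> u \<and> norm z \<le> L * norm u"
proof -
  obtain q w v where lim: "q \<longlonglongrightarrow> x" "w \<longlonglongrightarrow> z" "v \<longlonglongrightarrow> u"
    and wk: "\<And>k. w k \<in> regular_coderivative F (q k) (v k)"
    using z coderivative_fun_graph_iff[OF assms(1)] by blast
  have "eventually (\<lambda>k. q k \<in> S) sequentially"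
    using lim(1) \<open>open S\<close> \<open>x \<in> S\<close> by (rule topological_tendstoD)
  then have ev: "eventually
      (\<lambda>k. \<kappa> * (norm (v k))\<^sup>2 \<le> w k \<bullet> v k \<and> norm (w k) \<le> L * norm (v k)) sequentially"
    by eventually_elim (use reg wk in blast)
  have "\<kappa> * (norm u)\<^sup>2 \<le> z \<bullet> u"
    by (rule tendsto_le[OF _ tendsto_inner[OF lim(2,3)]
          tendsto_mult_left[OF tendsto_power[OF tendsto_norm[OF lim(3)]]]])
      (use ev in \<open>auto elim: eventually_mono\<close>)
  moreover have "norm z \<le> L * norm u"
    by (rule tendsto_le[OF _ tendsto_mult_left[OF tendsto_norm[OF lim(3)]] tendsto_norm[OF lim(2)]])
      (use ev in \<open>auto elim: eventually_mono\<close>)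
  ultimately show ?thesis ..
qed

lemma coderivative_nonpos_of_limits:
  fixes F :: "'a::euclidean_space \<Rightarrow> 'a"
  assumes cont: "continuous_on UNIV F" and "q \<longlonglongrightarrow> xb"
    and reg: "\<And>n. w n \<in> regular_coderivative F (q n) (u n)"
    and "\<And>n. norm (w n) \<le> L" "\<And>n. norm (u n) = 1"
    and small: "\<And>n. w n \<bullet> u n \<le> e n" and "e \<longlonglongrightarrow> 0"
  obtains w0 u0 where "u0 \<noteq> 0" "w0 \<in> coderivative (\<lambda>y. {F y}) xb (F xb) u0" "w0 \<bullet> u0 \<le> 0"
proof -
  have "seq_compact (cball (0::'a) L \<times> sphere (0::'a) 1)"
    by (intro compact_imp_seq_compact compact_Times compact_cball compact_sphere)
  moreover have "\<forall>n. (w n, u n) \<in> cball 0 L \<times> sphere 0 1"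
    using assms(4,5) by simp
  ultimately obtain l r where l: "l \<in> cball 0 L \<times> sphere 0 1" and "strict_mono r"
    and lim: "((\<lambda>n. (w n, u n)) \<circ> r) \<longlonglongrightarrow> l"
    by (rule seq_compactE)
  have w_lim: "(\<lambda>k. w (r k)) \<longlonglongrightarrow> fst l" and u_lim: "(\<lambda>k. u (r k)) \<longlonglongrightarrow> snd l"
    using tendsto_fst[OF lim] tendsto_snd[OF lim] by (simp_all add: o_def)
  moreover have "(\<lambda>k. q (r k)) \<longlonglongrightarrow> xb"
    using LIMSEQ_subseq_LIMSEQ[OF \<open>q \<longlonglongrightarrow> xb\<close> \<open>strict_mono r\<close>] by (simp add: o_def)
  ultimately have "fst l \<in> coderivative (\<lambda>y. {F y}) xb (F xb) (snd l)"
    unfolding coderivative_fun_graph_iff[OF cont] using reg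
    by (intro exI[of _ "\<lambda>k. q (r k)"] exI[of _ "\<lambda>k. w (r k)"] exI[of _ "\<lambda>k. u (r k)"]) simp
  moreover have "snd l \<noteq> 0" using l by auto
  moreover have "fst l \<bullet> snd l \<le> 0"
  proof (rule tendsto_le[OF _ _ tendsto_inner[OF w_lim u_lim]])
    show "(\<lambda>k. e (r k)) \<longlonglongrightarrow> 0"
      using LIMSEQ_subseq_LIMSEQ[OF \<open>e \<longlonglongrightarrow> 0\<close> \<open>strict_mono r\<close>] by (simp add: o_def)
  qed (use small in simp_all)
  ultimately show ?thesis using that by blast
qed

lemma regular_coderivative_uniformly_positive:
  fixes F :: "'a::euclidean_space \<Rightarrow> 'a"
  assumes cont: "continuous_on UNIV F" and Lip: "L-lipschitz_on (ball xb \<delta>) F" and "0 < \<delta>"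
    and pd: "\<And>u z. u \<noteq> 0 \<Longrightarrow> z \<in> coderivative (\<lambda>y. {F y}) xb (F xb) u \<Longrightarrow> 0 < z \<bullet> u"
  obtains \<kappa> \<rho> where "0 < \<kappa>" "0 < \<rho>" "\<rho> \<le> \<delta>"
    "\<And>q u w. q \<in> ball xb \<rho> \<Longrightarrow> w \<in> regular_coderivative F q u \<Longrightarrow> \<kappa> * (norm u)\<^sup>2 \<le> w \<bullet> u"
proof (rule ccontr)
  assume "\<not> thesis"
  have "\<exists>q u w. q \<in> ball xb (\<delta> / Suc n) \<and> w \<in> regular_coderivative F q u \<and>
      w \<bullet> u < 1 / Suc n * (norm u)\<^sup>2" for n :: nat
  proof -
    have "0 < \<delta> / Suc n" "\<delta> / Suc n \<le> \<delta>" "0 < 1 / real (Suc n)"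
      using \<open>0 < \<delta>\<close> by (auto simp: field_simps)
    then show ?thesis
      using that[of "1 / Suc n" "\<delta> / Suc n"] \<open>\<not> thesis\<close> by (meson not_le)
  qed
  then obtain q u w where q: "\<And>n. q n \<in> ball xb (\<delta> / Suc n)"
    and w: "\<And>n. w n \<in> regular_coderivative F (q n) (u n)"
    and small: "\<And>n. w n \<bullet> u n < 1 / Suc n * (norm (u n))\<^sup>2"
    by metis
  have "\<delta> / Suc n \<le> \<delta>" for n
    using \<open>0 < \<delta>\<close> by (simp add: field_simps)
  then have "q n \<in> ball xb \<delta>" for n
    using q[of n] unfolding mem_ball by (meson order.strict_trans2)
  then have wL: "norm (w n) \<le> L * norm (u n)" for n
    using regular_coderivative_norm_le[OF Lip open_ball _ w] by blast
  have "u n \<noteq> 0" for n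
    using wL[of n] small[of n] by auto
  define c where "c n = 1 / norm (u n)" for n
  have "0 < c n" for n unfolding c_def using \<open>u n \<noteq> 0\<close> by simp
  have "(\<lambda>n. dist (q n) xb) \<longlonglongrightarrow> 0"
  proof (rule real_tendsto_sandwich[of "\<lambda>n. 0" _ _ "\<lambda>n. \<delta> / Suc n"])
    show "(\<lambda>n. \<delta> / Suc n) \<longlonglongrightarrow> 0" by (rule LIMSEQ_Suc[OF lim_const_over_n])
  qed (use q in \<open>auto simp: dist_commute less_imp_le\<close>)
  then have "q \<longlonglongrightarrow> xb" using tendsto_dist_iff by blast
  then obtain w0 u0 where "u0 \<noteq> 0" "w0 \<in> coderivative (\<lambda>y. {F y}) xb (F xb) u0" "w0 \<bullet> u0 \<le> 0"
  proof (rule coderivative_nonpos_of_limits[OF cont _ regular_coderivative_scaleR[OF w \<open>0 < c _\<close>]])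
    show "norm (c n *\<^sub>R w n) \<le> L" "norm (c n *\<^sub>R u n) = 1" for n
      using wL[of n] \<open>u n \<noteq> 0\<close> unfolding c_def by (simp_all add: field_simps)
    show "c n *\<^sub>R w n \<bullet> c n *\<^sub>R u n \<le> 1 / real (Suc n)" for n
      using small[of n] \<open>u n \<noteq> 0\<close> unfolding c_def by (simp add: field_simps power2_eq_square)
  qed (rule LIMSEQ_Suc[OF lim_const_over_n])
  then show False using pd by (meson not_le)
qed

section \<open>A mean value inequality for proximal subgradients\<close>

definition proximal_subgradient :: "('a::real_inner \<Rightarrow> real) \<Rightarrow> 'a \<Rightarrow> 'a \<Rightarrow> bool" where
  "proximal_subgradient h q w \<longleftrightarrow>
     (\<exists>r>0. \<exists>M\<ge>0. \<forall>q'\<in>ball q r. h q + w \<bullet> (q' - q) - M * (norm (q' - q))\<^sup>2 \<le> h q')"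

lemma proximal_subgradient_in_regular_coderivative:
  assumes "proximal_subgradient (\<lambda>a. u \<bullet> F a) q w"
  shows "w \<in> regular_coderivative F q u"
proof -
  obtain r M where "0 < r" "0 \<le> M"
    and prox: "\<And>a. a \<in> ball q r \<Longrightarrow> u \<bullet> F q + w \<bullet> (a - q) - M * (norm (a - q))\<^sup>2 \<le> u \<bullet> F a"
    using assms unfolding proximal_subgradient_def by blast
  have "\<exists>\<delta>>0. \<forall>z\<in>fun_graph F. 0 < norm (z - (q, F q)) \<and> norm (z - (q, F q)) < \<delta>
      \<longrightarrow> (w, - u) \<bullet> (z - (q, F q)) \<le> \<epsilon> * norm (z - (q, F q))" if "0 < \<epsilon>" for \<epsilon>
  proof (intro exI conjI ballI impI)
    show "0 < min r (\<epsilon> / (M + 1))" using \<open>0 < r\<close> \<open>0 \<le> M\<close> \<open>0 < \<epsilon>\<close> by simp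
    fix z assume "z \<in> fun_graph F"
      and z: "0 < norm (z - (q, F q)) \<and> norm (z - (q, F q)) < min r (\<epsilon> / (M + 1))"
    then obtain a where a: "z = (a, F a)" unfolding fun_graph_def by auto
    have near: "norm (a - q) \<le> norm (z - (q, F q))"
      using a norm_fst_le[of "a - q" "F a - F q"] by simp
    with z have "a \<in> ball q r"
      by (simp add: dist_norm norm_minus_commute)
    have "M * norm (a - q) \<le> (M + 1) * (\<epsilon> / (M + 1))"
      using near z \<open>0 \<le> M\<close> by (intro mult_mono) auto
    then have small: "M * norm (a - q) \<le> \<epsilon>"
      using \<open>0 \<le> M\<close> by simp
    have "(w, - u) \<bullet> (z - (q, F q)) = w \<bullet> (a - q) - u \<bullet> (F a - F q)"
      using a by (simp add: inner_diff_right)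
    also have "\<dots> \<le> (M * norm (a - q)) * norm (a - q)"
      using prox[OF \<open>a \<in> ball q r\<close>] by (simp add: inner_diff_right power2_eq_square)
    also have "\<dots> \<le> \<epsilon> * norm (z - (q, F q))"
      using small near \<open>0 < \<epsilon>\<close> by (intro mult_mono) auto
    finally show "(w, - u) \<bullet> (z - (q, F q)) \<le> \<epsilon> * norm (z - (q, F q))" .
  qed
  then show ?thesis unfolding regular_coderivative_def regular_normal_cone_def by simp
qed

lemma increment_ge_of_local_increments:
  fixes e :: "real \<Rightarrow> real"
  assumes "0 < \<delta>"
    and step: "\<And>t s. 0 < s \<Longrightarrow> s \<le> \<delta> \<Longrightarrow> 0 \<le> t - s \<Longrightarrow> t \<le> 1 \<Longrightarrow> a * s - b * s\<^sup>2 \<le> e t - e (t - s)"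
  shows "a \<le> e 1 - e 0"
proof (rule field_le_epsilon)
  fix \<epsilon> :: real assume "0 < \<epsilon>"
  obtain N :: nat where "max (1 / \<delta>) (\<bar>b\<bar> / \<epsilon>) < N"
    using reals_Archimedean2 by blast
  then have N: "1 / \<delta> < N" "\<bar>b\<bar> / \<epsilon> < N" by simp_all
  have "0 < 1 / \<delta>" using \<open>0 < \<delta>\<close> by simp
  with N have "0 < real N" by linarith
  have "1 / N \<le> \<delta>" and "\<bar>b\<bar> / N \<le> \<epsilon>"
    using N \<open>0 < \<delta>\<close> \<open>0 < \<epsilon>\<close> \<open>0 < real N\<close> by (simp_all add: field_simps)
  have "a * (1 / N) - b * (1 / N)\<^sup>2 \<le> e (real (Suc j) / N) - e (real j / N)"
    if "j < N" for j
  proof -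
    have "real (Suc j) / N - 1 / N = real j / N" by (simp add: diff_divide_distrib[symmetric])
    moreover have "real (Suc j) \<le> N" using that by simp
    ultimately show ?thesis
      using step[of "1 / N" "real (Suc j) / N"] \<open>1 / N \<le> \<delta>\<close> \<open>0 < real N\<close> by simp
  qed
  then have "(\<Sum>j<N. a * (1 / N) - b * (1 / N)\<^sup>2) \<le> (\<Sum>j<N. e (real (Suc j) / N) - e (real j / N))"
    by (intro sum_mono) simp
  also have "\<dots> = e 1 - e 0"
    using sum_lessThan_telescope[of "\<lambda>j. e (real j / N)" N] \<open>0 < real N\<close> by simp
  finally have "(\<Sum>j<N. a * (1 / N) - b * (1 / N)\<^sup>2) \<le> e 1 - e 0" .
  moreover have "(\<Sum>j<N. a * (1 / N) - b * (1 / N)\<^sup>2) = a - b / N"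
    using \<open>0 < real N\<close> by (simp add: power2_eq_square right_diff_distrib)
  ultimately have "a - b / N \<le> e 1 - e 0" by simp
  moreover have "b / N \<le> \<bar>b\<bar> / N" using \<open>0 < real N\<close> by (simp add: divide_right_mono)
  ultimately show "a \<le> e 1 - e 0 + \<epsilon>"
    using \<open>\<bar>b\<bar> / N \<le> \<epsilon>\<close> by linarith
qed

lemma penalized_minimizer_exists:
  fixes h :: "'a::euclidean_space \<Rightarrow> real"
  assumes "continuous_on (cball p R) h" "0 \<le> R"
  obtains q where "q \<in> cball p R"
    "\<And>y. y \<in> cball p R \<Longrightarrow> h q + M * (norm (q - p))\<^sup>2 \<le> h y + M * (norm (y - p))\<^sup>2"
proof -
  have "continuous_on (cball p R) (\<lambda>y. h y + M * (norm (y - p))\<^sup>2)"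
    using assms(1) by (intro continuous_intros)
  moreover have "cball p R \<noteq> {}" using \<open>0 \<le> R\<close> by simp
  ultimately show ?thesis using continuous_attains_inf[OF compact_cball] that by blast
qed

lemma penalized_minimizer_properties:
  fixes h :: "'a::real_inner \<Rightarrow> real"
  assumes Lip: "Lh-lipschitz_on (cball p R) h" and "0 < R" "0 < M" "2 * Lh \<le> M * R"
    and "q \<in> cball p R"
    and min: "\<And>q'. q' \<in> cball p R \<Longrightarrow> h q + M * (norm (q - p))\<^sup>2 \<le> h q' + M * (norm (q' - p))\<^sup>2"
  shows "norm (q - p) \<le> R / 2"
    and "h p - Lh\<^sup>2 / (4 * M) \<le> h q + M * (norm (q - p))\<^sup>2"
    and "proximal_subgradient h q ((2 * M) *\<^sub>R (p - q))"
proof -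
  let ?t = "norm (q - p)"
  have "h p - h q \<le> Lh * ?t"
    using lipschitz_onD[OF Lip, of p q] \<open>q \<in> cball p R\<close> \<open>0 < R\<close>
    by (simp add: dist_real_def dist_norm norm_minus_commute)
  moreover have "h q + M * ?t\<^sup>2 \<le> h p" using min[of p] \<open>0 < R\<close> by simp
  ultimately have "(M * ?t) * ?t \<le> Lh * ?t" by (simp add: power2_eq_square algebra_simps)
  then have "M * ?t \<le> Lh \<or> ?t = 0" by (metis mult_right_le_imp_le norm_ge_zero order_le_less)
  then have "2 * (M * ?t) \<le> M * R"
    using \<open>2 * Lh \<le> M * R\<close> by (elim disjE) (linarith, use \<open>0 < R\<close> \<open>0 < M\<close> in simp)
  then have "M * (2 * ?t) \<le> M * R" by (simp only: mult.left_commute)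
  then show close: "?t \<le> R / 2"
    using mult_le_cancel_left_pos[OF \<open>0 < M\<close>, of "2 * ?t" R] by simp
  have "0 \<le> (2 * M * ?t - Lh)\<^sup>2" by simp
  then have "- Lh\<^sup>2 / (4 * M) \<le> M * ?t\<^sup>2 - Lh * ?t"
    using \<open>0 < M\<close> by (simp add: field_simps power2_eq_square)
  with \<open>h p - h q \<le> Lh * ?t\<close> show "h p - Lh\<^sup>2 / (4 * M) \<le> h q + M * ?t\<^sup>2" by linarith
  have "h q + (2 * M) *\<^sub>R (p - q) \<bullet> (q' - q) - M * (norm (q' - q))\<^sup>2 \<le> h q'"
    if "q' \<in> ball q (R / 2)" for q'
  proof -
    have "norm (q' - p) \<le> norm (q' - q) + norm (q - p)"
      using norm_triangle_ineq[of "q' - q" "q - p"] by simp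
    then have "q' \<in> cball p R" using that close by (simp add: dist_norm norm_minus_commute)
    moreover have "(2 * M) *\<^sub>R (p - q) \<bullet> (q' - q) = M * (?t\<^sup>2 + (norm (q' - q))\<^sup>2 - (norm (q' - p))\<^sup>2)"
    proof -
      have "(p - q) \<bullet> (q' - q) = - ((q' - q) \<bullet> (q - p))"
        by (metis inner_commute inner_minus_left minus_diff_eq)
      then have "2 * ((p - q) \<bullet> (q' - q)) = ?t\<^sup>2 + (norm (q' - q))\<^sup>2 - (norm (q' - p))\<^sup>2"
        using dot_norm[of "q' - q" "q - p"] by (simp add: norm_minus_commute field_simps)
      then show ?thesis by (metis inner_scaleR_left mult.assoc mult.left_commute)
    qed
    ultimately show ?thesis
      using min[of q'] by (simp add: algebra_simps)
  qed
  moreover have "0 < R / 2" "0 \<le> M" using \<open>0 < R\<close> \<open>0 < M\<close> by simp_all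
  ultimately show "proximal_subgradient h q ((2 * M) *\<^sub>R (p - q))"
    unfolding proximal_subgradient_def by blast
qed

lemma penalized_value_shift:
  fixes h :: "'a::real_inner \<Rightarrow> real"
  assumes "norm (q - p) \<le> R / 2" "norm v \<le> R / 2"
    and min: "\<And>y. y \<in> cball (p - v) R \<Longrightarrow>
      h q' + M * (norm (q' - (p - v)))\<^sup>2 \<le> h y + M * (norm (y - (p - v)))\<^sup>2"
  shows "h q' + M * (norm (q' - (p - v)))\<^sup>2
    \<le> h q + M * (norm (q - p))\<^sup>2 - (2 * M) *\<^sub>R (p - q) \<bullet> v + M * (norm v)\<^sup>2"
proof -
  have shift: "q - (p - v) = (q - p) + v" by simp
  have "norm (q - (p - v)) \<le> R"
    unfolding shift using norm_triangle_ineq[of "q - p" v] assms(1,2) by linarith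
  then have "h q' + M * (norm (q' - (p - v)))\<^sup>2 \<le> h q + M * (norm ((q - p) + v))\<^sup>2"
    using min[of q] shift by (simp add: dist_norm norm_minus_commute)
  also have "\<dots> = h q + M * (norm (q - p))\<^sup>2 - (2 * M) *\<^sub>R (p - q) \<bullet> v + M * (norm v)\<^sup>2"
    unfolding norm_add_square by (simp add: inner_diff_left algebra_simps)
  finally show ?thesis .
qed

lemma increment_ge_of_proximal_subgradients_penalized:
  fixes h :: "'a::euclidean_space \<Rightarrow> real"
  assumes Lip: "Lh-lipschitz_on S h" and "0 < R" "0 < M" "2 * Lh \<le> M * R"
    and seg: "\<And>p. p \<in> closed_segment x (x + u) \<Longrightarrow> cball p R \<subseteq> S"
    and prox: "\<And>q w. q \<in> S \<Longrightarrow> proximal_subgradient h q w \<Longrightarrow> \<kappa> * (norm u)\<^sup>2 \<le> w \<bullet> u"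
  shows "\<kappa> * (norm u)\<^sup>2 - Lh\<^sup>2 / (4 * M) \<le> h (x + u) - h x"
proof -
  let ?P = "closed_segment x (x + u)"
  have "\<exists>q. p \<in> ?P \<longrightarrow> q \<in> cball p R \<and>
      (\<forall>y\<in>cball p R. h q + M * (norm (q - p))\<^sup>2 \<le> h y + M * (norm (y - p))\<^sup>2)" for p
  proof (cases "p \<in> ?P")
    case True
    obtain q where "q \<in> cball p R"
      "\<And>y. y \<in> cball p R \<Longrightarrow> h q + M * (norm (q - p))\<^sup>2 \<le> h y + M * (norm (y - p))\<^sup>2"
      using penalized_minimizer_exists
        lipschitz_on_continuous_on[OF lipschitz_on_subset[OF Lip seg[OF True]]]
        less_imp_le[OF \<open>0 < R\<close>] by blast
    then show ?thesis by blast
  qed simp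
  then obtain qf where qf: "\<And>p. p \<in> ?P \<Longrightarrow> qf p \<in> cball p R"
    and qf_min: "\<And>p y. p \<in> ?P \<Longrightarrow> y \<in> cball p R \<Longrightarrow>
      h (qf p) + M * (norm (qf p - p))\<^sup>2 \<le> h y + M * (norm (y - p))\<^sup>2"
    by metis
  \<comment> \<open>\<open>E\<close> is the inf-convolution of \<open>h\<close> with \<open>M |.|\<^sup>2\<close>, localised to balls of radius \<open>R\<close>.\<close>
  define E where "E p = h (qf p) + M * (norm (qf p - p))\<^sup>2" for p
  have minimizer: "norm (qf p - p) \<le> R / 2" "h p - Lh\<^sup>2 / (4 * M) \<le> E p"
      "proximal_subgradient h (qf p) ((2 * M) *\<^sub>R (p - qf p))" if "p \<in> ?P" for p
    using penalized_minimizer_properties[OF lipschitz_on_subset[OF Lip seg[OF that]]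
        \<open>0 < R\<close> \<open>0 < M\<close> \<open>2 * Lh \<le> M * R\<close> qf[OF that] qf_min[OF that]]
    unfolding E_def by blast+
  have "0 < norm u + 1" using norm_ge_zero[of u] by linarith
  define \<delta> where "\<delta> = R / 2 / (norm u + 1)"
  have "\<kappa> * (norm u)\<^sup>2 \<le> E (x + 1 *\<^sub>R u) - E (x + 0 *\<^sub>R u)"
  proof (rule increment_ge_of_local_increments[where b = "M * (norm u)\<^sup>2"])
    show "0 < \<delta>" unfolding \<delta>_def using \<open>0 < R\<close> \<open>0 < norm u + 1\<close> by simp
    fix t s :: real assume s: "0 < s" "s \<le> \<delta>" "0 \<le> t - s" "t \<le> 1"
    let ?p = "x + t *\<^sub>R u"
    have "x + (t - s) *\<^sub>R u = ?p - s *\<^sub>R u" by (simp add: scaleR_diff_left)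
    then have P: "?p \<in> ?P" "?p - s *\<^sub>R u \<in> ?P"
      using s add_scaleR_in_closed_segment[of t x u] add_scaleR_in_closed_segment[of "t - s" x u]
      by (simp_all add: add_diff_eq)
    have "norm (s *\<^sub>R u) \<le> \<delta> * (norm u + 1)" using s by (simp, intro mult_mono) auto
    also have "\<dots> = R / 2"
      using \<delta>_def \<open>0 < norm u + 1\<close> by (metis nonzero_eq_divide_eq order_less_irrefl)
    finally have "E (?p - s *\<^sub>R u)
        \<le> E ?p - (2 * M) *\<^sub>R (?p - qf ?p) \<bullet> (s *\<^sub>R u) + M * (norm (s *\<^sub>R u))\<^sup>2"
      unfolding E_def using penalized_value_shift minimizer(1)[OF P(1)] qf_min[OF P(2)] by blast
    also have "\<dots> \<le> E ?p - s * (\<kappa> * (norm u)\<^sup>2) + M * (norm u)\<^sup>2 * s\<^sup>2"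
      using prox[OF _ minimizer(3)[OF P(1)]] qf[OF P(1)] seg[OF P(1)] s
      by (simp add: mult_left_mono subset_iff power_mult_distrib)
    finally show "\<kappa> * (norm u)\<^sup>2 * s - M * (norm u)\<^sup>2 * s\<^sup>2 \<le> E (x + t *\<^sub>R u) - E (x + (t - s) *\<^sub>R u)"
      by (simp add: algebra_simps)
  qed
  moreover have "E (x + u) \<le> h (x + u)" and "h x - Lh\<^sup>2 / (4 * M) \<le> E x"
    using qf_min[of "x + u" "x + u"] minimizer(2)[of x] \<open>0 < R\<close>
      add_scaleR_in_closed_segment[of 1 x u] add_scaleR_in_closed_segment[of 0 x u]
    unfolding E_def by simp_all
  ultimately show ?thesis by simp
qed

lemma increment_ge_of_proximal_subgradients:
  fixes h :: "'a::euclidean_space \<Rightarrow> real"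
  assumes Lip: "Lh-lipschitz_on S h" and "0 < R"
    and seg: "\<And>p. p \<in> closed_segment x (x + u) \<Longrightarrow> cball p R \<subseteq> S"
    and prox: "\<And>q w. q \<in> S \<Longrightarrow> proximal_subgradient h q w \<Longrightarrow> \<kappa> * (norm u)\<^sup>2 \<le> w \<bullet> u"
  shows "\<kappa> * (norm u)\<^sup>2 \<le> h (x + u) - h x"
proof (rule field_le_epsilon)
  fix \<epsilon> :: real assume "0 < \<epsilon>"
  have "0 \<le> Lh" using lipschitz_on_nonneg[OF Lip] .
  define M where "M = 2 * Lh / R + Lh\<^sup>2 / (4 * \<epsilon>) + 1"
  have "0 \<le> 2 * Lh / R" "0 \<le> Lh\<^sup>2 / (4 * \<epsilon>)" using \<open>0 \<le> Lh\<close> \<open>0 < R\<close> \<open>0 < \<epsilon>\<close> by simp_all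
  then have "0 < M" "2 * Lh / R \<le> M" "Lh\<^sup>2 / (4 * \<epsilon>) \<le> M" unfolding M_def by linarith+
  then have "2 * Lh \<le> M * R" "Lh\<^sup>2 / (4 * M) \<le> \<epsilon>"
    using \<open>0 < R\<close> \<open>0 < \<epsilon>\<close> by (simp_all add: divide_le_eq mult_ac)
  then show "\<kappa> * (norm u)\<^sup>2 \<le> h (x + u) - h x + \<epsilon>"
    using increment_ge_of_proximal_subgradients_penalized[OF Lip \<open>0 < R\<close> \<open>0 < M\<close> _ seg prox]
    by fastforce
qed

lemma strongly_monotone_of_regular_coderivative:
  fixes F :: "'a::euclidean_space \<Rightarrow> 'a"
  assumes Lip: "L-lipschitz_on (ball c \<rho>) F"
    and pos: "\<And>q u w. q \<in> ball c \<rho> \<Longrightarrow> w \<in> regular_coderivative F q u \<Longrightarrow> \<kappa> * (norm u)\<^sup>2 \<le> w \<bullet> u"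
    and x: "x \<in> ball c (\<rho> / 2)" and y: "y \<in> ball c (\<rho> / 2)"
  shows "\<kappa> * (norm (y - x))\<^sup>2 \<le> (y - x) \<bullet> (F y - F x)"
proof -
  let ?u = "y - x"
  have "0 < \<rho>" using x zero_le_dist[of c x] unfolding mem_ball by linarith
  \<comment> \<open>Apply the mean value inequality to the scalarisation \<open>a \<mapsto> (y - x) \<bullet> F a\<close>,
    whose proximal subgradients are regular coderivative elements of \<open>F\<close>.\<close>
  have "(norm ?u * L)-lipschitz_on (ball c \<rho>) (\<lambda>a. ?u \<bullet> F a)"
  proof (rule lipschitz_onI)
    fix a b assume "a \<in> ball c \<rho>" "b \<in> ball c \<rho>"
    have "dist (?u \<bullet> F a) (?u \<bullet> F b) \<le> norm ?u * dist (F a) (F b)"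
      using norm_cauchy_schwarz[of ?u "F a - F b"] Cauchy_Schwarz_ineq2[of ?u "F a - F b"]
      by (simp add: dist_real_def dist_norm inner_diff_right)
    also have "\<dots> \<le> norm ?u * (L * dist a b)"
      using lipschitz_onD[OF Lip \<open>a \<in> ball c \<rho>\<close> \<open>b \<in> ball c \<rho>\<close>] by (simp add: mult_left_mono)
    finally show "dist (?u \<bullet> F a) (?u \<bullet> F b) \<le> norm ?u * L * dist a b" by (simp add: mult.assoc)
  qed (use lipschitz_on_nonneg[OF Lip] in simp)
  then have "\<kappa> * (norm ?u)\<^sup>2 \<le> ?u \<bullet> F (x + ?u) - ?u \<bullet> F x"
  proof (rule increment_ge_of_proximal_subgradients)
    show "0 < \<rho> / 4" using \<open>0 < \<rho>\<close> by simp
    fix p assume "p \<in> closed_segment x (x + ?u)"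
    then have "p \<in> ball c (\<rho> / 2)"
      using closed_segment_subset[OF x y convex_ball] by auto
    show "cball p (\<rho> / 4) \<subseteq> ball c \<rho>"
    proof
      fix t assume "t \<in> cball p (\<rho> / 4)"
      with \<open>p \<in> ball c (\<rho> / 2)\<close> show "t \<in> ball c \<rho>"
        using dist_triangle[of c t p] zero_le_dist[of c p] unfolding mem_cball mem_ball by linarith
    qed
  next
    fix q w assume "q \<in> ball c \<rho>" "proximal_subgradient (\<lambda>a. ?u \<bullet> F a) q w"
    then show "\<kappa> * (norm ?u)\<^sup>2 \<le> w \<bullet> ?u"
      using pos proximal_subgradient_in_regular_coderivative by blast
  qed
  then show ?thesis by (simp add: inner_diff_right)
qed

lemma C11_uniform_estimates_near:
  assumes "C11 \<phi>" and pd: "\<And>u z. u \<noteq> 0 \<Longrightarrow> z \<in> gen_hessian \<phi> xb u \<Longrightarrow> 0 < z \<bullet> u"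
  obtains \<rho> \<kappa> L where "0 < \<rho>" "0 < \<kappa>" "0 < L" "L-lipschitz_on (ball xb \<rho>) (grad \<phi>)"
    "\<And>x y. x \<in> ball xb \<rho> \<Longrightarrow> y \<in> ball xb \<rho> \<Longrightarrow>
      \<kappa> * (norm (y - x))\<^sup>2 \<le> (y - x) \<bullet> (grad \<phi> y - grad \<phi> x)"
    "\<And>x u z. x \<in> ball xb \<rho> \<Longrightarrow> z \<in> gen_hessian \<phi> x u \<Longrightarrow>
      \<kappa> * (norm u)\<^sup>2 \<le> z \<bullet> u \<and> norm z \<le> L * norm u"
proof -
  note cont = C11_continuous_on_grad[OF \<open>C11 \<phi>\<close>]
  obtain \<delta> L where "0 < \<delta>" "0 < L" and Lip: "L-lipschitz_on (ball xb \<delta>) (grad \<phi>)"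
    using C11_lipschitz_on_grad[OF \<open>C11 \<phi>\<close>] by blast
  obtain \<kappa> \<rho> where "0 < \<kappa>" "0 < \<rho>" "\<rho> \<le> \<delta>"
    and pos: "\<And>q u w. q \<in> ball xb \<rho> \<Longrightarrow> w \<in> regular_coderivative (grad \<phi>) q u \<Longrightarrow> \<kappa> * (norm u)\<^sup>2 \<le> w \<bullet> u"
    using regular_coderivative_uniformly_positive[OF cont Lip \<open>0 < \<delta>\<close>] pd
    unfolding gen_hessian_def by blast
  have Lip\<rho>: "L-lipschitz_on (ball xb \<rho>) (grad \<phi>)"
    using lipschitz_on_subset[OF Lip subset_ball[OF \<open>\<rho> \<le> \<delta>\<close>]] .
  show ?thesis
  proof
    show "0 < \<rho> / 2" using \<open>0 < \<rho>\<close> by simp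
    show "L-lipschitz_on (ball xb (\<rho> / 2)) (grad \<phi>)"
      using lipschitz_on_subset[OF Lip\<rho> subset_ball, of "\<rho> / 2"] \<open>0 < \<rho>\<close> by simp
    show "\<kappa> * (norm (y - x))\<^sup>2 \<le> (y - x) \<bullet> (grad \<phi> y - grad \<phi> x)"
      if "x \<in> ball xb (\<rho> / 2)" "y \<in> ball xb (\<rho> / 2)" for x y
      using strongly_monotone_of_regular_coderivative[OF Lip\<rho> pos that] .
    show "\<kappa> * (norm u)\<^sup>2 \<le> z \<bullet> u \<and> norm z \<le> L * norm u"
      if "x \<in> ball xb (\<rho> / 2)" "z \<in> gen_hessian \<phi> x u" for x u z
    proof (rule coderivative_estimate_of_regular[OF cont open_ball])
      show "x \<in> ball xb \<rho>" using that(1) by (rule mem_ball_half)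
      show "z \<in> coderivative (\<lambda>y. {grad \<phi> y}) x (grad \<phi> x) u"
        using that(2) unfolding gen_hessian_def .
    qed (use pos regular_coderivative_norm_le[OF Lip\<rho> open_ball] in blast)
  qed fact+
qed

section \<open>Linear rates from sufficient decrease\<close>

lemma Q_linear_of_sufficient_decrease:
  fixes f g :: "nat \<Rightarrow> real"
  assumes "0 < a" "0 < b" and lower: "\<And>k. fs \<le> f k"
    and decrease: "\<And>k. K \<le> k \<Longrightarrow> f (Suc k) \<le> f k - a * (g k)\<^sup>2"
    and gap: "\<And>k. K \<le> k \<Longrightarrow> f k - fs \<le> b * (g k)\<^sup>2"
  obtains \<mu> where "0 < \<mu>" "\<mu> < 1" "\<And>k. K \<le> k \<Longrightarrow> f (Suc k) - fs \<le> \<mu> * (f k - fs)"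
proof
  let ?\<mu> = "max (1 / 2) (1 - a / b)"
  show "0 < ?\<mu>" "?\<mu> < 1" using \<open>0 < a\<close> \<open>0 < b\<close> by auto
  fix k assume "K \<le> k"
  have "(f k - fs) / b \<le> (g k)\<^sup>2"
    using gap[OF \<open>K \<le> k\<close>] \<open>0 < b\<close> by (simp add: divide_le_eq mult.commute)
  then have "a / b * (f k - fs) \<le> a * (g k)\<^sup>2"
    using mult_left_mono[of _ _ a] \<open>0 < a\<close> by fastforce
  then have "f (Suc k) - fs \<le> (1 - a / b) * (f k - fs)"
    using decrease[OF \<open>K \<le> k\<close>] by (simp add: algebra_simps)
  also have "\<dots> \<le> ?\<mu> * (f k - fs)"
    using lower[of k] by (intro mult_right_mono) auto
  finally show "f (Suc k) - fs \<le> ?\<mu> * (f k - fs)" .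
qed

lemma geometric_bound_of_Q_linear:
  fixes e :: "nat \<Rightarrow> real"
  assumes "0 < \<mu>" and contract: "\<And>k. K \<le> k \<Longrightarrow> e (Suc k) \<le> \<mu> * e k" and "K \<le> k"
  shows "e k \<le> e K / \<mu> ^ K * \<mu> ^ k"
  using \<open>K \<le> k\<close>
proof (induction k rule: dec_induct)
  case base
  then show ?case using \<open>0 < \<mu>\<close> by simp
next
  case (step k)
  have "e (Suc k) \<le> \<mu> * (e K / \<mu> ^ K * \<mu> ^ k)"
    using contract[OF step.hyps(1)] mult_left_mono[OF step.IH, of \<mu>] \<open>0 < \<mu>\<close> by simp
  also have "\<dots> = e K / \<mu> ^ K * \<mu> ^ Suc k"
    using \<open>0 < \<mu>\<close> by (simp add: field_simps)
  finally show ?case .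
qed

lemma dist_limit_le_of_geometric_steps:
  fixes x :: "nat \<Rightarrow> 'a::real_normed_vector"
  assumes "x \<longlonglongrightarrow> xb" "0 < r" "r < 1"
    and steps: "\<And>k. K \<le> k \<Longrightarrow> norm (x (Suc k) - x k) \<le> C * r ^ k" and "K \<le> k"
  shows "norm (x k - xb) \<le> C / (1 - r) * r ^ k"
proof -
  have partial: "norm (x m - x k) \<le> C * (r ^ k - r ^ m) / (1 - r)" if "k \<le> m" for m
    using that
  proof (induction m rule: dec_induct)
    case (step m)
    have "norm (x (Suc m) - x k) \<le> norm (x (Suc m) - x m) + norm (x m - x k)"
      using norm_triangle_ineq[of "x (Suc m) - x m" "x m - x k"] by simp
    also have "\<dots> \<le> C * r ^ m + C * (r ^ k - r ^ m) / (1 - r)"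
      using steps[of m] \<open>K \<le> k\<close> step by simp
    also have "\<dots> = C * (r ^ k - r ^ Suc m) / (1 - r)"
      using \<open>r < 1\<close> by (simp add: field_simps)
    finally show ?case .
  qed simp
  have "0 \<le> C * r ^ K" using order.trans[OF norm_ge_zero steps[OF order_refl]] .
  then have "0 \<le> C" using zero_less_power[OF \<open>0 < r\<close>, of K] by (simp add: zero_le_mult_iff)
  have "C * (r ^ k - r ^ m) / (1 - r) \<le> C * r ^ k / (1 - r)" for m
    using \<open>0 \<le> C\<close> \<open>0 < r\<close> \<open>r < 1\<close> by (intro divide_right_mono mult_left_mono) auto
  then have "norm (x m - x k) \<le> C / (1 - r) * r ^ k" if "k \<le> m" for m
    using order.trans[OF partial[OF that]] by simp
  then have "norm (xb - x k) \<le> C / (1 - r) * r ^ k"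
    by (intro tendsto_le[OF _ tendsto_const tendsto_norm[OF tendsto_diff[OF \<open>x \<longlonglongrightarrow> xb\<close> tendsto_const]]])
      (auto simp: eventually_sequentially)
  then show ?thesis by (simp add: norm_minus_commute)
qed

lemma geometric_bound_of_sufficient_decrease:
  fixes f g :: "nat \<Rightarrow> real"
  assumes "0 < a" "0 < \<mu>" and lower: "\<And>k. fs \<le> f k"
    and decrease: "\<And>k. K \<le> k \<Longrightarrow> f (Suc k) \<le> f k - a * (g k)\<^sup>2"
    and Q: "\<And>k. K \<le> k \<Longrightarrow> f (Suc k) - fs \<le> \<mu> * (f k - fs)"
  obtains B where "0 \<le> B" "\<And>k. K \<le> k \<Longrightarrow> g k \<le> B * sqrt \<mu> ^ k"
proof
  define A where "A = (f K - fs) / \<mu> ^ K"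
  have "0 \<le> A" unfolding A_def using lower[of K] \<open>0 < \<mu>\<close> by simp
  show "0 \<le> sqrt (A / a)" using \<open>0 \<le> A\<close> \<open>0 < a\<close> by simp
  fix k assume "K \<le> k"
  have "a * (g k)\<^sup>2 \<le> f k - fs" using decrease[OF \<open>K \<le> k\<close>] lower[of "Suc k"] by linarith
  also have "\<dots> \<le> A * \<mu> ^ k"
    unfolding A_def using geometric_bound_of_Q_linear[of \<mu> K "\<lambda>k. f k - fs" k, OF \<open>0 < \<mu>\<close> Q \<open>K \<le> k\<close>]
    by simp
  also have "\<dots> = a * (sqrt (A / a) * sqrt \<mu> ^ k)\<^sup>2"
    using \<open>0 \<le> A\<close> \<open>0 < a\<close> \<open>0 < \<mu>\<close> by (simp add: power_mult_distrib flip: real_sqrt_power)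
  finally have "(g k)\<^sup>2 \<le> (sqrt (A / a) * sqrt \<mu> ^ k)\<^sup>2" using \<open>0 < a\<close> by simp
  moreover have "0 \<le> sqrt (A / a) * sqrt \<mu> ^ k" using \<open>0 \<le> A\<close> \<open>0 < a\<close> \<open>0 < \<mu>\<close> by simp
  ultimately show "g k \<le> sqrt (A / a) * sqrt \<mu> ^ k" by (rule power2_le_imp_le)
qed

lemma linear_convergence_of_sufficient_decrease:
  fixes f g :: "nat \<Rightarrow> real" and x :: "nat \<Rightarrow> 'a::real_normed_vector"
  assumes "0 < a" "0 < b" "0 \<le> c" and lower: "\<And>k. fs \<le> f k"
    and decrease: "\<And>k. K \<le> k \<Longrightarrow> f (Suc k) \<le> f k - a * (g k)\<^sup>2"
    and gap: "\<And>k. K \<le> k \<Longrightarrow> f k - fs \<le> b * (g k)\<^sup>2"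
    and steps: "\<And>k. K \<le> k \<Longrightarrow> norm (x (Suc k) - x k) \<le> c * g k"
    and "x \<longlonglongrightarrow> xb"
  shows "(\<exists>\<mu> k0. 0 < \<mu> \<and> \<mu> < 1 \<and> (\<forall>k\<ge>k0. f (Suc k) - fs \<le> \<mu> * (f k - fs))) \<and>
    (\<exists>C r k0. 0 < C \<and> 0 < r \<and> r < 1 \<and> (\<forall>k\<ge>k0. norm (x k - xb) \<le> C * r ^ k \<and> g k \<le> C * r ^ k))"
proof -
  obtain \<mu> where "0 < \<mu>" "\<mu> < 1" and Q: "\<And>k. K \<le> k \<Longrightarrow> f (Suc k) - fs \<le> \<mu> * (f k - fs)"
    using Q_linear_of_sufficient_decrease[of a b fs f K g] assms(1,2) lower decrease gap by blast
  define r where "r = sqrt \<mu>"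
  have "0 < r" "r < 1" unfolding r_def using \<open>0 < \<mu>\<close> \<open>\<mu> < 1\<close> by simp_all
  obtain B where "0 \<le> B" and g_le: "\<And>k. K \<le> k \<Longrightarrow> g k \<le> B * r ^ k"
    unfolding r_def using geometric_bound_of_sufficient_decrease[of a \<mu> fs f K g]
      \<open>0 < a\<close> \<open>0 < \<mu>\<close> lower decrease Q by blast
  have x_le: "norm (x k - xb) \<le> c * B / (1 - r) * r ^ k" if "K \<le> k" for k
  proof (rule dist_limit_le_of_geometric_steps[OF \<open>x \<longlonglongrightarrow> xb\<close> \<open>0 < r\<close> \<open>r < 1\<close> _ that])
    fix i assume "K \<le> i"
    then show "norm (x (Suc i) - x i) \<le> c * B * r ^ i"
      using order.trans[OF steps mult_left_mono[OF g_le \<open>0 \<le> c\<close>]] by (simp add: mult.assoc)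
  qed
  define C where "C = max 1 (max B (c * B / (1 - r)))"
  have "c * B / (1 - r) * r ^ k \<le> C * r ^ k" for k
    unfolding C_def by (rule mult_right_mono) (simp_all add: \<open>0 < r\<close> less_imp_le)
  moreover have "B * r ^ k \<le> C * r ^ k" for k
    unfolding C_def by (rule mult_right_mono) (simp_all add: \<open>0 < r\<close> less_imp_le)
  ultimately have "norm (x k - xb) \<le> C * r ^ k \<and> g k \<le> C * r ^ k" if "K \<le> k" for k
    using x_le[OF that] g_le[OF that] by (meson order.trans)
  moreover have "0 < C" unfolding C_def by simp
  ultimately show ?thesis using \<open>0 < \<mu>\<close> \<open>\<mu> < 1\<close> Q \<open>0 < r\<close> \<open>r < 1\<close> by blast
qed

lemma convergent_eventually_close:
  fixes xs :: "nat \<Rightarrow> 'a::real_normed_vector"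
  assumes lim: "xs \<longlonglongrightarrow> xb" and "0 < \<rho>" "0 < \<eta>"
  obtains K where "\<And>k. K \<le> k \<Longrightarrow> xs k \<in> ball xb \<rho>" "\<And>k. K \<le> k \<Longrightarrow> norm (xs (Suc k) - xs k) < \<eta>"
proof -
  have "eventually (\<lambda>k. xs k \<in> ball xb \<rho>) sequentially"
    using lim \<open>0 < \<rho>\<close> by (intro topological_tendstoD) auto
  moreover have "(\<lambda>k. norm (xs (Suc k) - xs k)) \<longlonglongrightarrow> 0"
    using tendsto_diff[OF LIMSEQ_Suc[OF lim] lim] by (simp add: tendsto_norm_zero)
  then have "eventually (\<lambda>k. norm (xs (Suc k) - xs k) < \<eta>) sequentially"
    using \<open>0 < \<eta>\<close> by (rule order_tendstoD(2))
  ultimately have "eventually (\<lambda>k. xs k \<in> ball xb \<rho> \<and> norm (xs (Suc k) - xs k) < \<eta>) sequentially"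
    by (rule eventually_conj)
  then show ?thesis using that unfolding eventually_sequentially by blast
qed

section \<open>The generalized damped Newton iteration\<close>

lemma step_size_gt_of_armijo_failure:
  assumes "C11 \<phi>" "\<sigma> < 1" "0 < L" "0 < t" "d \<noteq> 0"
    and descent: "\<kappa> * (norm d)\<^sup>2 \<le> - (grad \<phi> x \<bullet> d)"
    and fail: "\<not> armijo \<phi> \<sigma> x d t"
    and Lip: "\<And>y. y \<in> closed_segment x (x + t *\<^sub>R d) \<Longrightarrow>
      norm (grad \<phi> y - grad \<phi> x) \<le> L * norm (y - x)"
  shows "(1 - \<sigma>) * \<kappa> / L < t"
proof -
  let ?g = "grad \<phi> x"
  have "\<phi> x + \<sigma> * t * (?g \<bullet> d) < \<phi> (x + t *\<^sub>R d)"
    using fail unfolding armijo_def by simp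
  also have "\<dots> \<le> \<phi> x + ?g \<bullet> (t *\<^sub>R d) + L / 2 * (norm (t *\<^sub>R d))\<^sup>2"
    by (rule C11_descent_lemma[OF \<open>C11 \<phi>\<close> Lip])
  also have "\<dots> = \<phi> x + t * (?g \<bullet> d) + L / 2 * (t * norm d)\<^sup>2"
    using \<open>0 < t\<close> by simp
  finally have "(1 - \<sigma>) * t * (- (?g \<bullet> d)) < L / 2 * (t * norm d)\<^sup>2"
    by (simp add: algebra_simps)
  moreover have "(1 - \<sigma>) * t * (\<kappa> * (norm d)\<^sup>2) \<le> (1 - \<sigma>) * t * (- (?g \<bullet> d))"
    using descent \<open>\<sigma> < 1\<close> \<open>0 < t\<close> by (intro mult_left_mono) auto
  ultimately have "(t * (norm d)\<^sup>2) * ((1 - \<sigma>) * \<kappa>) < (t * (norm d)\<^sup>2) * (L * t / 2)"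
    by (simp add: power2_eq_square algebra_simps)
  then have "(1 - \<sigma>) * \<kappa> < L * t / 2"
    using \<open>0 < t\<close> \<open>d \<noteq> 0\<close> by (simp add: mult_less_cancel_left_pos)
  moreover have "L * t / 2 < L * t" using \<open>0 < L\<close> \<open>0 < t\<close> by simp
  ultimately have "(1 - \<sigma>) * \<kappa> < L * t" by linarith
  then show ?thesis
    using \<open>0 < L\<close> by (simp add: pos_divide_less_eq mult.commute)
qed

lemma armijo_backtracking_step_ge:
  fixes \<phi> :: "'a::euclidean_space \<Rightarrow> real"
  assumes "C11 \<phi>" "\<sigma> < 1" "0 < \<beta>" "\<beta> < 1" "0 < L" "d \<noteq> 0"
    and Lip: "L-lipschitz_on (ball xb \<rho>) (grad \<phi>)"
    and descent: "\<kappa> * (norm d)\<^sup>2 \<le> - (grad \<phi> x \<bullet> d)"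
    and first: "\<And>i. i < j \<Longrightarrow> \<not> armijo \<phi> \<sigma> x d (\<beta> ^ i)"
    and near: "x \<in> ball xb (\<rho> / 2)" "norm (\<beta> ^ j *\<^sub>R d) < \<beta> * \<rho> / 2"
  shows "\<beta> * min 1 ((1 - \<sigma>) * \<kappa> / L) \<le> \<beta> ^ j"
proof (cases j)
  case 0
  have "\<beta> * min 1 ((1 - \<sigma>) * \<kappa> / L) \<le> \<beta> * 1" using \<open>0 < \<beta>\<close> by (intro mult_left_mono) simp_all
  then show ?thesis using 0 \<open>\<beta> < 1\<close> by simp
next
  case (Suc i)
  \<comment> \<open>The rejected trial step \<open>\<beta> ^ i\<close> still lies in the ball where \<open>grad \<phi>\<close> is \<open>L\<close>-Lipschitz.\<close>
  have "(1 - \<sigma>) * \<kappa> / L < \<beta> ^ i"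
  proof (rule step_size_gt_of_armijo_failure[OF \<open>C11 \<phi>\<close> \<open>\<sigma> < 1\<close> \<open>0 < L\<close> _ \<open>d \<noteq> 0\<close> descent])
    show "0 < \<beta> ^ i" using \<open>0 < \<beta>\<close> by simp
    show "\<not> armijo \<phi> \<sigma> x d (\<beta> ^ i)" using first Suc by simp
    have "norm (\<beta> ^ i *\<^sub>R d) < \<rho> / 2"
      using near(2) Suc \<open>0 < \<beta>\<close> by (simp add: mult.assoc)
    then have "closed_segment x (x + \<beta> ^ i *\<^sub>R d) \<subseteq> ball xb \<rho>"
      by (rule closed_segment_add_subset_ball[OF near(1)])
    moreover have "x \<in> ball xb \<rho>" using near(1) by (rule mem_ball_half)
    ultimately show "norm (grad \<phi> y - grad \<phi> x) \<le> L * norm (y - x)"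
      if "y \<in> closed_segment x (x + \<beta> ^ i *\<^sub>R d)" for y
      using lipschitz_onD[OF Lip] that by (auto simp: dist_norm)
  qed
  then show ?thesis
    using Suc \<open>0 < \<beta>\<close> by (simp add: min_le_iff_disj mult_left_mono)
qed

lemma damped_newton_step_estimates:
  fixes \<phi> :: "'a::euclidean_space \<Rightarrow> real"
  assumes "C11 \<phi>" "0 < \<sigma>" "\<sigma> < 1" "0 < \<beta>" "\<beta> < 1" "0 < \<kappa>" "0 < L"
    and Lip: "L-lipschitz_on (ball xb \<rho>) (grad \<phi>)"
    and dir: "\<kappa> * (norm d)\<^sup>2 \<le> - (grad \<phi> x \<bullet> d)" "norm (grad \<phi> x) \<le> L * norm d"
    and "grad \<phi> x \<noteq> 0"
    and arm: "armijo \<phi> \<sigma> x d (\<beta> ^ j)" "\<And>i. i < j \<Longrightarrow> \<not> armijo \<phi> \<sigma> x d (\<beta> ^ i)"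
    and near: "x \<in> ball xb (\<rho> / 2)" "norm (\<beta> ^ j *\<^sub>R d) < \<beta> * \<rho> / 2"
  shows "\<phi> (x + \<beta> ^ j *\<^sub>R d) \<le> \<phi> x - \<sigma> * (\<beta> * min 1 ((1 - \<sigma>) * \<kappa> / L)) * \<kappa> / L\<^sup>2 * (norm (grad \<phi> x))\<^sup>2"
    and "norm (\<beta> ^ j *\<^sub>R d) \<le> norm (grad \<phi> x) / \<kappa>"
proof -
  let ?g = "grad \<phi> x" and ?\<tau> = "\<beta> * min 1 ((1 - \<sigma>) * \<kappa> / L)"
  have "d \<noteq> 0" using dir(2) \<open>?g \<noteq> 0\<close> by auto
  have "\<kappa> * norm d * norm d \<le> norm ?g * norm d"
    using dir(1) Cauchy_Schwarz_ineq2[of ?g d] by (simp add: power2_eq_square abs_le_iff)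
  then have d_le: "norm d \<le> norm ?g / \<kappa>"
    using \<open>d \<noteq> 0\<close> \<open>0 < \<kappa>\<close> by (simp add: pos_le_divide_eq mult.commute)
  have "?\<tau> \<le> \<beta> ^ j"
    using armijo_backtracking_step_ge[OF assms(1,3,4,5,7) \<open>d \<noteq> 0\<close> Lip dir(1) arm(2) near] .
  have "\<phi> (x + \<beta> ^ j *\<^sub>R d) \<le> \<phi> x + \<sigma> * \<beta> ^ j * (?g \<bullet> d)"
    using arm(1) unfolding armijo_def .
  also have "\<dots> \<le> \<phi> x - \<sigma> * ?\<tau> * (\<kappa> * (norm d)\<^sup>2)"
  proof -
    have "\<sigma> * ?\<tau> * (\<kappa> * (norm d)\<^sup>2) \<le> \<sigma> * \<beta> ^ j * (\<kappa> * (norm d)\<^sup>2)"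
      using \<open>?\<tau> \<le> \<beta> ^ j\<close> \<open>0 < \<sigma>\<close> \<open>0 < \<kappa>\<close> by (intro mult_right_mono mult_left_mono) auto
    also have "\<dots> \<le> \<sigma> * \<beta> ^ j * (- (?g \<bullet> d))"
      using dir(1) \<open>0 < \<sigma>\<close> \<open>0 < \<beta>\<close> by (intro mult_left_mono) auto
    finally show ?thesis by simp
  qed
  also have "\<dots> \<le> \<phi> x - \<sigma> * ?\<tau> * \<kappa> / L\<^sup>2 * (norm ?g)\<^sup>2"
  proof -
    have "(norm ?g)\<^sup>2 \<le> L\<^sup>2 * (norm d)\<^sup>2"
      using dir(2) by (metis norm_ge_zero power_mono power_mult_distrib)
    moreover have "0 \<le> \<sigma> * ?\<tau> * \<kappa>"
      using \<open>0 < \<sigma>\<close> \<open>0 < \<beta>\<close> \<open>0 < \<kappa>\<close> \<open>0 < L\<close> \<open>\<sigma> < 1\<close> by simp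
    ultimately have "\<sigma> * ?\<tau> * \<kappa> * ((norm ?g)\<^sup>2 / L\<^sup>2) \<le> \<sigma> * ?\<tau> * \<kappa> * (norm d)\<^sup>2"
      using \<open>0 < L\<close> by (intro mult_left_mono) (simp_all add: divide_le_eq mult.commute)
    then show ?thesis by (simp add: mult.assoc)
  qed
  finally show "\<phi> (x + \<beta> ^ j *\<^sub>R d) \<le> \<phi> x - \<sigma> * ?\<tau> * \<kappa> / L\<^sup>2 * (norm ?g)\<^sup>2" .
  have "norm (\<beta> ^ j *\<^sub>R d) \<le> norm d"
    using \<open>0 < \<beta>\<close> \<open>\<beta> < 1\<close> by (simp add: mult_left_le_one_le power_le_one)
  with d_le show "norm (\<beta> ^ j *\<^sub>R d) \<le> norm ?g / \<kappa>" by linarith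
qed

lemma gdn_sequenceE:
  assumes "gdn_sequence \<phi> \<sigma> \<beta> x0 xs"
  obtains d j where "xs 0 = x0" "\<And>k. grad \<phi> (xs k) \<noteq> 0"
    "\<And>k. - grad \<phi> (xs k) \<in> gen_hessian \<phi> (xs k) (d k)"
    "\<And>k. armijo \<phi> \<sigma> (xs k) (d k) (\<beta> ^ j k)"
    "\<And>k i. i < j k \<Longrightarrow> \<not> armijo \<phi> \<sigma> (xs k) (d k) (\<beta> ^ i)"
    "\<And>k. xs (Suc k) = xs k + \<beta> ^ j k *\<^sub>R d k"
proof -
  from assms have "\<forall>k. \<exists>d j. - grad \<phi> (xs k) \<in> gen_hessian \<phi> (xs k) d \<and>
      armijo \<phi> \<sigma> (xs k) d (\<beta> ^ j) \<and> (\<forall>i<j. \<not> armijo \<phi> \<sigma> (xs k) d (\<beta> ^ i)) \<and>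
      xs (Suc k) = xs k + \<beta> ^ j *\<^sub>R d"
    unfolding gdn_sequence_def by blast
  then obtain d j where "\<forall>k. - grad \<phi> (xs k) \<in> gen_hessian \<phi> (xs k) (d k) \<and>
      armijo \<phi> \<sigma> (xs k) (d k) (\<beta> ^ j k) \<and> (\<forall>i<j k. \<not> armijo \<phi> \<sigma> (xs k) (d k) (\<beta> ^ i)) \<and>
      xs (Suc k) = xs k + \<beta> ^ j k *\<^sub>R d k"
    by metis
  with assms that show ?thesis unfolding gdn_sequence_def by blast
qed

lemma gdn_sequence_descent:
  assumes gdn: "gdn_sequence \<phi> \<sigma> \<beta> x0 xs" and "0 < \<sigma>" "0 < \<beta>"
    and pd: "\<forall>x. \<phi> x \<le> \<phi> x0 \<longrightarrow> (\<forall>u z. u \<noteq> 0 \<and> z \<in> gen_hessian \<phi> x u \<longrightarrow> z \<bullet> u > 0)"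
  shows "\<phi> (xs k) \<le> \<phi> x0" and "\<phi> (xs (Suc k)) \<le> \<phi> (xs k)"
proof -
  obtain d j where "xs 0 = x0" and hess: "\<And>k. - grad \<phi> (xs k) \<in> gen_hessian \<phi> (xs k) (d k)"
    and arm: "\<And>k. armijo \<phi> \<sigma> (xs k) (d k) (\<beta> ^ j k)"
    and step: "\<And>k. xs (Suc k) = xs k + \<beta> ^ j k *\<^sub>R d k"
    using gdn_sequenceE[OF gdn] by metis
  have decrease: "\<phi> (xs (Suc k)) \<le> \<phi> (xs k)" if "\<phi> (xs k) \<le> \<phi> x0" for k
  proof -
    have "0 \<le> - grad \<phi> (xs k) \<bullet> d k"
    proof (cases "d k = 0")
      case False
      then show ?thesis using pd that hess[of k] by (metis less_imp_le)
    qed simp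
    then have "\<sigma> * \<beta> ^ j k * (grad \<phi> (xs k) \<bullet> d k) \<le> 0"
      using \<open>0 < \<sigma>\<close> \<open>0 < \<beta>\<close> by (simp add: mult_nonneg_nonpos)
    then show ?thesis using arm[of k] step[of k] unfolding armijo_def by simp
  qed
  show below: "\<phi> (xs k) \<le> \<phi> x0"
    by (induction k) (use \<open>xs 0 = x0\<close> decrease in \<open>auto intro: order.trans\<close>)
  show "\<phi> (xs (Suc k)) \<le> \<phi> (xs k)" by (rule decrease[OF below])
qed

lemma gdn_sequence_limit_value_le:
  assumes "C11 \<phi>" and gdn: "gdn_sequence \<phi> \<sigma> \<beta> x0 xs" and "0 < \<sigma>" "0 < \<beta>"
    and pd: "\<forall>x. \<phi> x \<le> \<phi> x0 \<longrightarrow> (\<forall>u z. u \<noteq> 0 \<and> z \<in> gen_hessian \<phi> x u \<longrightarrow> z \<bullet> u > 0)"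
    and lim: "xs \<longlonglongrightarrow> xb"
  shows "\<phi> xb \<le> \<phi> (xs k)"
proof -
  have "decseq (\<lambda>k. \<phi> (xs k))"
    using gdn_sequence_descent(2)[OF gdn \<open>0 < \<sigma>\<close> \<open>0 < \<beta>\<close> pd] by (rule decseq_SucI)
  moreover have "(\<lambda>k. \<phi> (xs k)) \<longlonglongrightarrow> \<phi> xb"
    using continuous_on_tendsto_compose[OF C11_continuous_on[OF \<open>C11 \<phi>\<close>] lim] by simp
  ultimately show ?thesis by (rule decseq_ge)
qed

lemma gdn_sequence_tail_estimates:
  fixes \<phi> :: "'a::euclidean_space \<Rightarrow> real"
  assumes "C11 \<phi>"
    and pd: "\<forall>x. \<phi> x \<le> \<phi> x0 \<longrightarrow> (\<forall>u z. u \<noteq> 0 \<and> z \<in> gen_hessian \<phi> x u \<longrightarrow> z \<bullet> u > 0)"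
    and "0 < \<sigma>" "\<sigma> < 1" "0 < \<beta>" "\<beta> < 1"
    and gdn: "gdn_sequence \<phi> \<sigma> \<beta> x0 xs" and lim: "xs \<longlonglongrightarrow> xb"
  obtains a b c K where "0 < a" "0 < b" "0 \<le> c"
    "\<And>k. K \<le> k \<Longrightarrow> \<phi> (xs (Suc k)) \<le> \<phi> (xs k) - a * (norm (grad \<phi> (xs k)))\<^sup>2"
    "\<And>k. K \<le> k \<Longrightarrow> \<phi> (xs k) - \<phi> xb \<le> b * (norm (grad \<phi> (xs k)))\<^sup>2"
    "\<And>k. K \<le> k \<Longrightarrow> norm (xs (Suc k) - xs k) \<le> c * norm (grad \<phi> (xs k))"
proof -
  obtain d j where "xs 0 = x0" and gnz: "\<And>k. grad \<phi> (xs k) \<noteq> 0"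
    and hess: "\<And>k. - grad \<phi> (xs k) \<in> gen_hessian \<phi> (xs k) (d k)"
    and arm: "\<And>k. armijo \<phi> \<sigma> (xs k) (d k) (\<beta> ^ j k)"
      "\<And>k i. i < j k \<Longrightarrow> \<not> armijo \<phi> \<sigma> (xs k) (d k) (\<beta> ^ i)"
    and step: "\<And>k. xs (Suc k) = xs k + \<beta> ^ j k *\<^sub>R d k"
    using gdn_sequenceE[OF gdn] by metis
  have "\<phi> xb \<le> \<phi> x0"
    using gdn_sequence_limit_value_le[OF assms(1) gdn assms(3,5) pd lim, of 0] \<open>xs 0 = x0\<close> by simp
  then obtain \<rho> \<kappa> L where "0 < \<rho>" "0 < \<kappa>" "0 < L" and Lip: "L-lipschitz_on (ball xb \<rho>) (grad \<phi>)"
    and mono: "\<And>x y. x \<in> ball xb \<rho> \<Longrightarrow> y \<in> ball xb \<rho> \<Longrightarrow>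
      \<kappa> * (norm (y - x))\<^sup>2 \<le> (y - x) \<bullet> (grad \<phi> y - grad \<phi> x)"
    and est: "\<And>x u z. x \<in> ball xb \<rho> \<Longrightarrow> z \<in> gen_hessian \<phi> x u \<Longrightarrow>
      \<kappa> * (norm u)\<^sup>2 \<le> z \<bullet> u \<and> norm z \<le> L * norm u"
    using C11_uniform_estimates_near[OF \<open>C11 \<phi>\<close>, of xb] pd by blast
  obtain K where near: "\<And>k. K \<le> k \<Longrightarrow> xs k \<in> ball xb (\<rho> / 2)"
    and close: "\<And>k. K \<le> k \<Longrightarrow> norm (xs (Suc k) - xs k) < \<beta> * \<rho> / 2"
    using convergent_eventually_close[OF lim, of "\<rho> / 2" "\<beta> * \<rho> / 2"] \<open>0 < \<rho>\<close> \<open>0 < \<beta>\<close> by auto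
  let ?a = "\<sigma> * (\<beta> * min 1 ((1 - \<sigma>) * \<kappa> / L)) * \<kappa> / L\<^sup>2"
  show ?thesis
  proof (rule that[of ?a "1 / (2 * \<kappa>)" "1 / \<kappa>" K])
    show "0 < ?a" "0 < 1 / (2 * \<kappa>)" "0 \<le> 1 / \<kappa>"
      using \<open>0 < \<sigma>\<close> \<open>\<sigma> < 1\<close> \<open>0 < \<beta>\<close> \<open>0 < \<kappa>\<close> \<open>0 < L\<close> by simp_all
    fix k assume "K \<le> k"
    have x: "xs k \<in> ball xb \<rho>" using mem_ball_half[OF near(1)[OF \<open>K \<le> k\<close>]] .
    have dir: "\<kappa> * (norm (d k))\<^sup>2 \<le> - (grad \<phi> (xs k) \<bullet> d k)" "norm (grad \<phi> (xs k)) \<le> L * norm (d k)"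
      using est[OF x hess[of k]] by simp_all
    have "norm (\<beta> ^ j k *\<^sub>R d k) < \<beta> * \<rho> / 2" using close[OF \<open>K \<le> k\<close>] step[of k] by simp
    note newton = damped_newton_step_estimates[OF \<open>C11 \<phi>\<close> \<open>0 < \<sigma>\<close> \<open>\<sigma> < 1\<close> \<open>0 < \<beta>\<close> \<open>\<beta> < 1\<close>
        \<open>0 < \<kappa>\<close> \<open>0 < L\<close> Lip dir gnz arm near[OF \<open>K \<le> k\<close>] this]
    show "\<phi> (xs (Suc k)) \<le> \<phi> (xs k) - ?a * (norm (grad \<phi> (xs k)))\<^sup>2"
      using newton(1) step[of k] by simp
    show "norm (xs (Suc k) - xs k) \<le> 1 / \<kappa> * norm (grad \<phi> (xs k))"
      using newton(2) step[of k] by simp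
    have "closed_segment (xs k) xb \<subseteq> ball xb \<rho>"
      using closed_segment_subset[OF x _ convex_ball] \<open>0 < \<rho>\<close> by simp
    then show "\<phi> (xs k) - \<phi> xb \<le> 1 / (2 * \<kappa>) * (norm (grad \<phi> (xs k)))\<^sup>2"
      using C11_polyak_lojasiewicz[OF \<open>C11 \<phi>\<close> \<open>0 < \<kappa>\<close>] mono x by (simp add: subset_iff)
  qed
qed

theorem theorem4p2:
  fixes \<phi> :: "'a::euclidean_space \<Rightarrow> real" and x0 xb :: 'a and xs :: "nat \<Rightarrow> 'a"
    and \<sigma> \<beta> :: real
  assumes "C11 \<phi>"
    and "\<forall>x. \<phi> x \<le> \<phi> x0 \<longrightarrow> (\<forall>u z. u \<noteq> 0 \<and> z \<in> gen_hessian \<phi> x u \<longrightarrow> z \<bullet> u > 0)"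
    and "0 < \<sigma>" "\<sigma> < 1/2" "0 < \<beta>" "\<beta> < 1"
    and "gdn_sequence \<phi> \<sigma> \<beta> x0 xs"
    and "xs \<longlonglongrightarrow> xb"
    and "\<forall>k. xs k \<noteq> xb"
  shows "(\<exists>\<mu> k0. 0 < \<mu> \<and> \<mu> < 1 \<and>
            (\<forall>k\<ge>k0. \<phi> (xs (Suc k)) - \<phi> xb \<le> \<mu> * (\<phi> (xs k) - \<phi> xb)))
       \<and> (\<exists>c r k0. 0 < c \<and> 0 < r \<and> r < 1 \<and>
            (\<forall>k\<ge>k0. norm (xs k - xb) \<le> c * r ^ k \<and> norm (grad \<phi> (xs k)) \<le> c * r ^ k))"
proof -
  have "\<sigma> < 1" using \<open>\<sigma> < 1/2\<close> by simp
  have lower: "\<And>k. \<phi> xb \<le> \<phi> (xs k)"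
    using gdn_sequence_limit_value_le[OF assms(1,7,3,5,2,8)] .
  show ?thesis
  proof (rule gdn_sequence_tail_estimates[OF assms(1-3) \<open>\<sigma> < 1\<close> assms(5-8)])
    fix a b c K
    assume "0 < a" "0 < b" "0 \<le> c"
      and decrease: "\<And>k. K \<le> k \<Longrightarrow> \<phi> (xs (Suc k)) \<le> \<phi> (xs k) - a * (norm (grad \<phi> (xs k)))\<^sup>2"
      and gap: "\<And>k. K \<le> k \<Longrightarrow> \<phi> (xs k) - \<phi> xb \<le> b * (norm (grad \<phi> (xs k)))\<^sup>2"
      and steps: "\<And>k. K \<le> k \<Longrightarrow> norm (xs (Suc k) - xs k) \<le> c * norm (grad \<phi> (xs k))"
    show ?thesis
      by (rule linear_convergence_of_sufficient_decrease[OF \<open>0 < a\<close> \<open>0 < b\<close> \<open>0 \<le> c\<close>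
            lower decrease gap steps \<open>xs \<longlonglongrightarrow> xb\<close>])
  qed
qed

end
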